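(* Let $M$ be a modular lattice of finite length. For all $a,b\in M$: (a) if $a\le b$ then $a^*\le b^*$; (a$^\delta$) if $a\le b$ then $a^+\le b^+$; (b) $a\le a^{+*}\le a^*$; (b$^\delta$) $a^+\le a^{*+}\le a$; (c) $a^{*+*}=a^*$; (c$^\delta$) $a^{+*+}=a^+$; (d) if $a=a^{*+}$ and $b=b^{*+}$ then $(a+b)^{*+}=a+b$; (d$^\delta$) if $a=a^{+*}$ and $b=b^{+*}$ then $(a\cdot b)^{+*}=a\cdot b$; (e) $(a+b)^+=a^++b^+$; (e$^\delta$) $(a\cdot b)^*=a^*\cdot b^*$. (Here $a^{*+}$ means $(a^* )^+$, etc.)
   Context: $M$ is a modular lattice of finite length (every chain finite) with join $+$, meet $\cdot$, least element $0$ and greatest element $1$. For $a\in M$: $a^*$ is the join of all elements covering $a$ if $a<1$, and $1^*=1$; $a^+$ is the meet of all elements covered by $a$ if $a>0$, and $0^+=0$. *)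

theory Defs
  imports Main
begin

definition modular_lattice :: "'a::bounded_lattice itself \<Rightarrow> bool" where
  "modular_lattice _ \<longleftrightarrow> (\<forall>a b c::'a. a \<le> c \<longrightarrow> sup a (inf b c) = inf (sup a b) c)"

definition finite_length :: "'a::bounded_lattice itself \<Rightarrow> bool" where
  "finite_length _ \<longleftrightarrow> (\<forall>C::'a set. Complete_Partial_Order.chain (\<le>) C \<longrightarrow> finite C)"

definition covers :: "'a::order \<Rightarrow> 'a \<Rightarrow> bool" where
  "covers a b \<longleftrightarrow> a < b \<and> \<not> (\<exists>c. a < c \<and> c < b)"

definition is_join :: "'a::order set \<Rightarrow> 'a \<Rightarrow> bool" where
  "is_join S x \<longleftrightarrow> (\<forall>s\<in>S. s \<le> x) \<and> (\<forall>y. (\<forall>s\<in>S. s \<le> y) \<longrightarrow> x \<le> y)"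

definition is_meet :: "'a::order set \<Rightarrow> 'a \<Rightarrow> bool" where
  "is_meet S x \<longleftrightarrow> (\<forall>s\<in>S. x \<le> s) \<and> (\<forall>y. (\<forall>s\<in>S. y \<le> s) \<longrightarrow> y \<le> x)"

definition ustar :: "'a::bounded_lattice \<Rightarrow> 'a" where
  "ustar a = (if a = top then top else (THE x. is_join {c. covers a c} x))"

definition lplus :: "'a::bounded_lattice \<Rightarrow> 'a" where
  "lplus a = (if a = bot then bot else (THE x. is_meet {c. covers c a} x))"

end

theory Submission
  imports Defs "HOL-Library.Dual_Ordered_Lattice"
begin

text \<open>
  The operators \<open>a \<mapsto> a\<^sup>+\<close> and \<open>a \<mapsto> a\<^sup>*\<close> form a Galois connection,
  \<open>a\<^sup>+ \<le> x \<longleftrightarrow> a \<le> x\<^sup>*\<close>, and all assertions are formal consequences of this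
  adjunction together with \<open>a \<le> a\<^sup>*\<close>. Monotonicity of \<open>*\<close> holds because the
  modular law transports an upper cover of \<open>a\<close> to an upper cover of any \<open>b \<ge> a\<close>
  (or keeps it below \<open>b\<close>); everything about \<open>+\<close> follows in the dual lattice.

  The heart is the unit \<open>a \<le> a\<^sup>+\<^sup>*\<close>. By finite length, \<open>a\<^sup>+\<close> is the meet of
  finitely many lower covers \<open>c\<^sub>1, \<dots>, c\<^sub>n\<close> of \<open>a\<close>, and we show \<open>a \<le> (c\<^sub>1 \<cdots> c\<^sub>n)\<^sup>*\<close> by
  induction on \<open>n\<close>. With \<open>d = c\<^sub>2 \<cdots> c\<^sub>n\<close> and \<open>d \<not>\<le> c\<^sub>1\<close> we have \<open>a = c\<^sub>1 + d\<close>;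
  by modularity \<open>d\<close> covers \<open>c\<^sub>1 d\<close>, and \<open>c\<^sub>1 d = (c\<^sub>1 c\<^sub>2) \<cdots> (c\<^sub>1 c\<^sub>n)\<close> is a meet of
  \<open>n - 1\<close> lower covers of \<open>c\<^sub>1\<close>, so both \<open>c\<^sub>1\<close> and \<open>d\<close> lie below \<open>(c\<^sub>1 d)\<^sup>*\<close>.
\<close>

locale galois_adjunction =
  fixes lower upper :: "'a::lattice \<Rightarrow> 'a"
  assumes lower_le_iff_le_upper: "lower y \<le> x \<longleftrightarrow> y \<le> upper x"
begin

lemma le_upper_lower: "x \<le> upper (lower x)"
  using lower_le_iff_le_upper by blast

lemma lower_upper_le: "lower (upper x) \<le> x"
  using lower_le_iff_le_upper by blast

lemma upper_mono: "x \<le> y \<Longrightarrow> upper x \<le> upper y"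
  using lower_le_iff_le_upper lower_upper_le order_trans by blast

lemma lower_mono: "x \<le> y \<Longrightarrow> lower x \<le> lower y"
  using lower_le_iff_le_upper le_upper_lower order_trans by blast

lemma upper_lower_upper: "upper (lower (upper x)) = upper x"
  by (simp add: order.antisym le_upper_lower lower_upper_le upper_mono)

lemma lower_upper_lower: "lower (upper (lower x)) = lower x"
  by (simp add: order.antisym le_upper_lower lower_upper_le lower_mono)

lemma lower_sup: "lower (sup x y) = sup (lower x) (lower y)"
proof (rule order.antisym)
  have "x \<le> upper (sup (lower x) (lower y))" and "y \<le> upper (sup (lower x) (lower y))"
    by (simp_all flip: lower_le_iff_le_upper)
  then show "lower (sup x y) \<le> sup (lower x) (lower y)"
    by (simp add: lower_le_iff_le_upper)
qed (simp add: lower_mono)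

lemma upper_inf: "upper (inf x y) = inf (upper x) (upper y)"
proof (rule order.antisym)
  have "lower (inf (upper x) (upper y)) \<le> x" and "lower (inf (upper x) (upper y)) \<le> y"
    by (simp_all add: lower_le_iff_le_upper)
  then show "inf (upper x) (upper y) \<le> upper (inf x y)"
    by (simp flip: lower_le_iff_le_upper)
qed (simp add: upper_mono)

lemma sup_lower_upper_fixed:
  assumes "x = lower (upper x)" and "y = lower (upper y)"
  shows "lower (upper (sup x y)) = sup x y"
proof (rule order.antisym)
  have "lower (upper x) \<le> lower (upper (sup x y))" and "lower (upper y) \<le> lower (upper (sup x y))"
    by (simp_all add: lower_mono upper_mono)
  with assms show "sup x y \<le> lower (upper (sup x y))"
    by simp
qed (rule lower_upper_le)

lemma inf_upper_lower_fixed: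
  assumes "x = upper (lower x)" and "y = upper (lower y)"
  shows "upper (lower (inf x y)) = inf x y"
proof (rule order.antisym)
  have "upper (lower (inf x y)) \<le> upper (lower x)" and "upper (lower (inf x y)) \<le> upper (lower y)"
    by (simp_all add: lower_mono upper_mono)
  with assms show "upper (lower (inf x y)) \<le> inf x y"
    by simp
qed (rule le_upper_lower)

end

subsection \<open>Duality\<close>

lemma all_dual: "(\<forall>x. P x) \<longleftrightarrow> (\<forall>y. P (dual y))"
  by (metis dual_undual)

lemma ex_dual: "(\<exists>x. P x) \<longleftrightarrow> (\<exists>y. P (dual y))"
  by (metis dual_undual)

lemma modular_lattice_dual:
  assumes "modular_lattice TYPE('a::bounded_lattice)"
  shows "modular_lattice TYPE('a dual)"
  unfolding modular_lattice_def all_dual[where P = "\<lambda>x. \<forall>y z. _ x y z"]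
    all_dual[where P = "\<lambda>y. \<forall>z. _ y z"] all_dual[where P = "\<lambda>z. _ z"]
  using assms unfolding modular_lattice_def
  by (metis (no_types) dual_inf_eq dual_sup_eq inf.commute less_eq_dual_iff sup.commute)

lemma finite_length_dual:
  assumes "finite_length TYPE('a::bounded_lattice)"
  shows "finite_length TYPE('a dual)"
  unfolding finite_length_def
proof (intro allI impI)
  fix C :: "'a dual set"
  assume "Complete_Partial_Order.chain (\<le>) C"
  then have "Complete_Partial_Order.chain (\<le>) (undual ` C)"
    by (auto simp: chain_def dual_less_eq_iff)
  with assms have "finite (undual ` C)"
    unfolding finite_length_def by blast
  then show "finite C"
    using finite_imageD inj_on_subset[OF inj_undual subset_UNIV] by blast
qed

lemma covers_dual_iff: "covers (dual x) (dual y) \<longleftrightarrow> covers (y::'a::order) x"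
  unfolding covers_def ex_dual[where P = "\<lambda>c. _ < c \<and> c < _"] by auto

lemma is_join_dual_iff: "is_join (dual ` S) (dual x) \<longleftrightarrow> is_meet S (x::'a::order)"
  unfolding is_join_def is_meet_def all_dual[where P = "\<lambda>y. _ y \<longrightarrow> _ y"] by simp

lemma is_meet_dual_iff: "is_meet (dual ` S) (dual x) \<longleftrightarrow> is_join S (x::'a::order)"
  unfolding is_join_def is_meet_def all_dual[where P = "\<lambda>y. _ y \<longrightarrow> _ y"] by simp

lemma Collect_dual: "Collect P = dual ` {x. P (dual x)}"
  by (auto intro: image_eqI[where x = "undual _"])

subsection \<open>Lattices of finite length\<close>

lemma wf_less_if_finite_length:
  assumes "finite_length TYPE('a::bounded_lattice)"
  shows "wf {(x::'a, y). x < y}"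
  unfolding wf_iff_no_infinite_down_chain
proof
  assume "\<exists>f. \<forall>i. (f (Suc i), f i) \<in> {(x::'a, y). x < y}"
  then obtain f :: "nat \<Rightarrow> 'a" where f: "\<And>i. f (Suc i) < f i"
    by auto
  have less: "f j < f i" if "i < j" for i j
    using that by (induction i j rule: less_Suc_induct) (auto intro: f order.strict_trans)
  have "Complete_Partial_Order.chain (\<le>) (range f)"
    unfolding chain_def by (metis less less_imp_le nat_neq_iff order_refl rangeE)
  with assms have "finite (range f)"
    unfolding finite_length_def by blast
  moreover have "inj f"
    by (rule injI) (metis less nat_neq_iff order.irrefl)
  ultimately show False
    using finite_imageD[of f UNIV] by simp
qed

lemma finite_length_minimal:
  assumes "finite_length TYPE('a::bounded_lattice)" and "(x::'a) \<in> Q"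
  obtains m where "m \<in> Q" and "\<And>y. y < m \<Longrightarrow> y \<notin> Q"
  using wfE_min[OF wf_less_if_finite_length[OF assms(1)] assms(2)] by auto

lemma is_join_unique: "is_join S x \<Longrightarrow> is_join S y \<Longrightarrow> x = y"
  unfolding is_join_def by (meson order.antisym)

lemma is_meet_unique: "is_meet S x \<Longrightarrow> is_meet S y \<Longrightarrow> x = y"
  unfolding is_meet_def by (meson order.antisym)

lemma is_join_exists:
  assumes "finite_length TYPE('a::bounded_lattice)"
  shows "\<exists>x. is_join (S::'a set) x"
proof -
  let ?U = "{y. \<forall>s\<in>S. s \<le> y}"
  obtain m where m: "m \<in> ?U" and least: "\<And>y. y < m \<Longrightarrow> y \<notin> ?U"
    using finite_length_minimal[OF assms, of top ?U] by auto
  have "m \<le> y" if "y \<in> ?U" for y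
  proof -
    have "inf m y \<in> ?U"
      using m that by simp
    then show ?thesis
      using least[of "inf m y"] by (metis inf.absorb_iff1 inf_le1 le_less)
  qed
  with m show ?thesis
    unfolding is_join_def by blast
qed

lemma is_meet_exists:
  assumes "finite_length TYPE('a::bounded_lattice)"
  shows "\<exists>x. is_meet (S::'a set) x"
proof -
  obtain x where "is_join (dual ` S) x"
    using is_join_exists[OF finite_length_dual[OF assms]] by blast
  then have "is_meet S (undual x)"
    using is_join_dual_iff[of S "undual x"] by simp
  then show ?thesis ..
qed

lemma ex_covers_le:
  assumes "finite_length TYPE('a::bounded_lattice)" and "(a::'a) < b"
  obtains c where "covers a c" and "c \<le> b"
proof -
  obtain c where c: "a < c" "c \<le> b" and least: "\<And>y. y < c \<Longrightarrow> \<not> (a < y \<and> y \<le> b)"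
    using finite_length_minimal[OF assms(1), of b "{c. a < c \<and> c \<le> b}"] assms(2) by auto
  then have "covers a c"
    unfolding covers_def using order.strict_implies_order order.trans by blast
  with c show ?thesis
    using that by blast
qed

lemma ex_covers_ge:
  assumes "finite_length TYPE('a::bounded_lattice)" and "(a::'a) < b"
  obtains c where "covers c b" and "a \<le> c"
proof -
  obtain c where "covers (dual b) c" and "c \<le> dual a"
    using ex_covers_le[OF finite_length_dual[OF assms(1)], of "dual b" "dual a"] assms(2) by auto
  then show ?thesis
    using that[of "undual c"] covers_dual_iff[of b "undual c"] by (simp add: dual_less_eq_iff)
qed

lemma finite_subset_Inf_fin_lower_bound:
  assumes "finite_length TYPE('a::bounded_lattice)" and "(s::'a) \<in> S"
  obtains C where "finite C" "C \<noteq> {}" "C \<subseteq> S" "\<And>s. s \<in> S \<Longrightarrow> Inf_fin C \<le> s"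
proof -
  let ?Q = "{Inf_fin C | C. finite C \<and> C \<noteq> {} \<and> C \<subseteq> S}"
  have "s \<in> ?Q"
    using assms(2) by (intro CollectI exI[of _ "{s}"]) auto
  then obtain m where "m \<in> ?Q" and least: "\<And>y. y < m \<Longrightarrow> y \<notin> ?Q"
    by (rule finite_length_minimal[OF assms(1)]) blast
  then obtain C where C: "finite C" "C \<noteq> {}" "C \<subseteq> S" "m = Inf_fin C"
    by blast
  have "m \<le> s" if "s \<in> S" for s
  proof -
    have "inf s m \<in> ?Q"
      using C that by (intro CollectI exI[of _ "insert s C"]) auto
    then show ?thesis
      using least[of "inf s m"] by (metis inf.absorb_iff2 inf_le2 le_less)
  qed
  with C show ?thesis
    using that by blast
qed

lemma is_join_ustar:
  assumes "finite_length TYPE('a::bounded_lattice)" and "(a::'a) \<noteq> top"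
  shows "is_join {c. covers a c} (ustar a)"
proof -
  obtain x where x: "is_join {c. covers a c} x"
    using is_join_exists[OF assms(1)] ..
  then have "is_join {c. covers a c} (THE x. is_join {c. covers a c} x)"
    by (rule theI) (rule is_join_unique[OF _ x])
  with assms(2) show ?thesis
    by (simp add: ustar_def)
qed

lemma is_meet_lplus:
  assumes "finite_length TYPE('a::bounded_lattice)" and "(a::'a) \<noteq> bot"
  shows "is_meet {c. covers c a} (lplus a)"
proof -
  obtain x where x: "is_meet {c. covers c a} x"
    using is_meet_exists[OF assms(1)] ..
  then have "is_meet {c. covers c a} (THE x. is_meet {c. covers c a} x)"
    by (rule theI) (rule is_meet_unique[OF _ x])
  with assms(2) show ?thesis
    by (simp add: lplus_def)
qed

lemma ustar_dual:
  assumes "finite_length TYPE('a::bounded_lattice)"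
  shows "ustar (dual a) = dual (lplus (a::'a))"
proof (cases "a = bot")
  case True
  then show ?thesis
    by (simp add: ustar_def lplus_def)
next
  case False
  then have "is_join {c. covers (dual a) c} (dual (lplus a))"
    using is_meet_lplus[OF assms False]
    by (simp add: Collect_dual[of "covers (dual a)"] covers_dual_iff is_join_dual_iff)
  moreover have "is_join {c. covers (dual a) c} (ustar (dual a))"
    using False by (intro is_join_ustar finite_length_dual assms) (simp flip: dual_bot_eq)
  ultimately show ?thesis
    by (rule is_join_unique[rotated])
qed

lemma lplus_dual:
  assumes "finite_length TYPE('a::bounded_lattice)"
  shows "lplus (dual a) = dual (ustar (a::'a))"
proof (cases "a = top")
  case True
  then show ?thesis
    by (simp add: ustar_def lplus_def)
next
  case False
  then have "is_meet {c. covers c (dual a)} (dual (ustar a))"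
    using is_join_ustar[OF assms False]
    by (simp add: Collect_dual[of "\<lambda>c. covers c (dual a)"] covers_dual_iff is_meet_dual_iff)
  moreover have "is_meet {c. covers c (dual a)} (lplus (dual a))"
    using False by (intro is_meet_lplus finite_length_dual assms) (simp flip: dual_top_eq)
  ultimately show ?thesis
    by (rule is_meet_unique[rotated])
qed

lemma covers_le_ustar:
  assumes "finite_length TYPE('a::bounded_lattice)" and "covers (a::'a) c"
  shows "c \<le> ustar a"
proof -
  have "a \<noteq> top"
    using assms(2) unfolding covers_def by auto
  with assms show ?thesis
    using is_join_ustar unfolding is_join_def by blast
qed

lemma ustar_least:
  assumes "finite_length TYPE('a::bounded_lattice)" and "(a::'a) \<noteq> top"
    and "\<And>c. covers a c \<Longrightarrow> c \<le> y"
  shows "ustar a \<le> y"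
  using is_join_ustar[OF assms(1,2)] assms(3) unfolding is_join_def by blast

lemma le_ustar:
  assumes "finite_length TYPE('a::bounded_lattice)"
  shows "(a::'a) \<le> ustar a"
proof (cases "a = top")
  case False
  then obtain c where "covers a c"
    using ex_covers_le[OF assms, of a top] top.not_eq_extremum by blast
  then show ?thesis
    using covers_le_ustar[OF assms] unfolding covers_def by (meson order.strict_implies_order order.trans)
qed (simp add: ustar_def)

subsection \<open>Modularity\<close>

lemma modular_lattice_sup_inf:
  assumes "modular_lattice TYPE('a::bounded_lattice)" and "(x::'a) \<le> z"
  shows "sup x (inf y z) = inf (sup x y) z"
  using assms unfolding modular_lattice_def by blast

lemma covers_sup_transpose:
  assumes "modular_lattice TYPE('a::bounded_lattice)"
    and "covers (a::'a) c" and "a \<le> x" and "\<not> c \<le> x"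
  shows "covers x (sup x c)"
  unfolding covers_def
proof (intro conjI notI)
  show "x < sup x c"
    using assms(4) by (metis less_le sup.cobounded1 sup.cobounded2)
  assume "\<exists>y. x < y \<and> y < sup x c"
  then obtain y where y: "x < y" "y < sup x c"
    by blast
  have "sup x (inf c y) = y"
    using modular_lattice_sup_inf[OF assms(1), of x y c] y by (simp add: inf.absorb1 inf.commute less_imp_le)
  moreover have "a \<le> inf c y" and "inf c y \<le> c"
    using assms(2,3) y unfolding covers_def by auto
  ultimately consider "inf c y = a" | "inf c y = c"
    using assms(2) unfolding covers_def by (metis le_less)
  then show False
  proof cases
    case 1
    then show False
      using \<open>sup x (inf c y) = y\<close> y(1) assms(3) by (simp add: sup.absorb1)
  next
    case 2
    then have "sup x c \<le> y"
      using y(1) by (metis inf.absorb_iff1 le_supI less_imp_le)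
    then show False
      using y(2) by (simp add: less_le_not_le)
  qed
qed

lemma covers_inf_transpose:
  assumes "modular_lattice TYPE('a::bounded_lattice)"
    and "covers (x::'a) y" and "z \<le> y" and "\<not> z \<le> x"
  shows "covers (inf z x) z"
proof -
  have "covers (dual z) (dual (inf z x))"
    using covers_sup_transpose[OF modular_lattice_dual[OF assms(1)], of "dual y" "dual x" "dual z"] assms(2-4)
    by (simp add: covers_dual_iff)
  then show ?thesis
    unfolding covers_dual_iff .
qed

lemma covers_inf_if_distinct_covers:
  assumes "modular_lattice TYPE('a::bounded_lattice)"
    and "covers (c::'a) y" and "covers e y" and "c \<noteq> e"
  shows "covers (inf c e) c"
proof (rule covers_inf_transpose[OF assms(1,3)])
  show "c \<le> y"
    using assms(2) unfolding covers_def by (simp add: less_imp_le)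
  show "\<not> c \<le> e"
    using assms(2-4) unfolding covers_def by (metis le_less)
qed

lemma sup_eq_if_covers:
  assumes "covers (c::'a::lattice) y" and "d \<le> y" and "\<not> d \<le> c"
  shows "sup c d = y"
  using assms unfolding covers_def by (metis le_less le_sup_iff sup.absorb_iff1 sup_ge1)

lemma ustar_mono:
  assumes "modular_lattice TYPE('a::bounded_lattice)" and "finite_length TYPE('a)"
    and "(a::'a) \<le> b"
  shows "ustar a \<le> ustar b"
proof (cases "b = top")
  case False
  with assms(3) have "a \<noteq> top"
    using top.extremum_unique by blast
  then show ?thesis
  proof (rule ustar_least[OF assms(2)])
    fix c
    assume c: "covers a c"
    show "c \<le> ustar b"
    proof (cases "c \<le> b")
      case True
      then show ?thesis
        using le_ustar[OF assms(2), of b] by simp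
    next
      case False
      then have "covers b (sup b c)"
        using covers_sup_transpose[OF assms(1) c assms(3)] by simp
      then show ?thesis
        using covers_le_ustar[OF assms(2)] by (meson order.trans sup_ge2)
    qed
  qed
qed (simp add: ustar_def)

subsection \<open>The Galois connection\<close>

lemma Inf_fin_image_inf:
  assumes "finite D" and "D \<noteq> {}"
  shows "Inf_fin (inf c ` D) = inf c (Inf_fin D)"
  by (rule Inf_fin.hom_commute[symmetric]) (auto simp: assms inf_aci)

lemma le_ustar_Inf_fin_lower_covers:
  assumes md: "modular_lattice TYPE('a::bounded_lattice)" and fl: "finite_length TYPE('a)"
  shows "finite C \<Longrightarrow> C \<noteq> {} \<Longrightarrow> (\<And>c. c \<in> C \<Longrightarrow> covers c (y::'a)) \<Longrightarrow> y \<le> ustar (Inf_fin C)"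
proof (induction "card C" arbitrary: C y rule: less_induct)
  case less
  obtain c where c: "c \<in> C"
    using less.prems(2) by blast
  show ?case
  proof (cases "C = {c}")
    case True
    then show ?thesis
      using covers_le_ustar[OF fl] less.prems(3) c by simp
  next
    case False
    define D where "D = C - {c}"
    define d where "d = Inf_fin D"
    have D: "finite D" "D \<noteq> {}" "c \<notin> D" "card D < card C"
      using less.prems(1) c False card_Diff1_less[OF less.prems(1) c] by (auto simp: D_def)
    have C_eq: "C = insert c D"
      using c by (auto simp: D_def)
    have cy: "covers c y" and Dy: "\<And>e. e \<in> D \<Longrightarrow> covers e y"
      using less.prems(3) C_eq by auto
    have Inf_C: "Inf_fin C = inf c d"
      using D by (simp add: C_eq d_def)
    have y_le: "y \<le> ustar d"
      using less.hyps[OF D(4) D(1,2) Dy] by (simp add: d_def)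
    show ?thesis
    proof (cases "d \<le> c")
      case True
      then show ?thesis
        using y_le Inf_C by (simp add: inf.absorb2)
    next
      case False
      have "d \<le> y"
        using D(1,2) Dy unfolding d_def covers_def by (meson Inf_fin.coboundedI ex_in_conv less_imp_le order.trans)
      then have y_eq: "y = sup c d" and "covers (inf d c) d"
        using sup_eq_if_covers[OF cy _ False] covers_inf_transpose[OF md cy _ False] by auto
      then have "d \<le> ustar (inf c d)"
        using covers_le_ustar[OF fl] by (simp add: inf.commute)
      moreover have "c \<le> ustar (inf c d)"
      proof -
        have "card (inf c ` D) < card C"
          using card_image_le[OF D(1)] D(4) by (meson le_less_trans)
        moreover have "covers x c" if "x \<in> inf c ` D" for x
          using that covers_inf_if_distinct_covers[OF md cy Dy] D(3) by blast
        ultimately show ?thesis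
          using less.hyps[of "inf c ` D" c] D(1,2) by (simp add: Inf_fin_image_inf d_def)
      qed
      ultimately show ?thesis
        using y_eq Inf_C by simp
    qed
  qed
qed

lemma le_ustar_lplus:
  assumes md: "modular_lattice TYPE('a::bounded_lattice)" and fl: "finite_length TYPE('a)"
  shows "(y::'a) \<le> ustar (lplus y)"
proof (cases "y = bot")
  case False
  then obtain c where "covers c y"
    using ex_covers_ge[OF fl, of bot y] bot.not_eq_extremum by blast
  then obtain C where C: "finite C" "C \<noteq> {}" "C \<subseteq> {c. covers c y}"
    and lower: "\<And>c. covers c y \<Longrightarrow> Inf_fin C \<le> c"
    using finite_subset_Inf_fin_lower_bound[OF fl, of c "{c. covers c y}"] by auto
  have "y \<le> ustar (Inf_fin C)"
    using le_ustar_Inf_fin_lower_covers[OF md fl C(1,2)] C(3) by blast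
  also have "\<dots> \<le> ustar (lplus y)"
    using is_meet_lplus[OF fl False] lower unfolding is_meet_def by (simp add: ustar_mono[OF md fl])
  finally show ?thesis .
qed (simp add: lplus_def)

lemma le_ustar_if_lplus_le:
  assumes "modular_lattice TYPE('a::bounded_lattice)" and "finite_length TYPE('a)"
    and "lplus (y::'a) \<le> x"
  shows "y \<le> ustar x"
  using le_ustar_lplus[OF assms(1,2)] ustar_mono[OF assms] by (rule order.trans)

lemma lplus_le_iff_le_ustar:
  assumes md: "modular_lattice TYPE('a::bounded_lattice)" and fl: "finite_length TYPE('a)"
  shows "lplus (y::'a) \<le> x \<longleftrightarrow> y \<le> ustar x"
proof
  assume "y \<le> ustar x"
  then have "lplus (dual x) \<le> dual y"
    by (simp add: lplus_dual[OF fl])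
  then have "dual x \<le> ustar (dual y)"
    by (rule le_ustar_if_lplus_le[OF modular_lattice_dual[OF md] finite_length_dual[OF fl]])
  then show "lplus y \<le> x"
    by (simp add: ustar_dual[OF fl])
qed (rule le_ustar_if_lplus_le[OF md fl])

theorem lemma6p1:
  fixes a b :: "'a::bounded_lattice"
  assumes "modular_lattice TYPE('a)" and "finite_length TYPE('a)"
  shows "(a \<le> b \<longrightarrow> ustar a \<le> ustar b)
    \<and> (a \<le> b \<longrightarrow> lplus a \<le> lplus b)
    \<and> (a \<le> ustar (lplus a) \<and> ustar (lplus a) \<le> ustar a)
    \<and> (lplus a \<le> lplus (ustar a) \<and> lplus (ustar a) \<le> a)
    \<and> ustar (lplus (ustar a)) = ustar a
    \<and> lplus (ustar (lplus a)) = lplus a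
    \<and> (a = lplus (ustar a) \<and> b = lplus (ustar b) \<longrightarrow> lplus (ustar (sup a b)) = sup a b)
    \<and> (a = ustar (lplus a) \<and> b = ustar (lplus b) \<longrightarrow> ustar (lplus (inf a b)) = inf a b)
    \<and> lplus (sup a b) = sup (lplus a) (lplus b)
    \<and> ustar (inf a b) = inf (ustar a) (ustar b)"
proof -
  interpret galois_adjunction "lplus :: 'a \<Rightarrow> 'a" ustar
    by unfold_locales (simp add: lplus_le_iff_le_ustar[OF assms])
  have lplus_le: "lplus x \<le> x" for x :: 'a
    using le_ustar[OF assms(2)] by (simp add: lower_le_iff_le_upper)
  show ?thesis
    by (intro conjI impI upper_mono lower_mono le_upper_lower lower_upper_le upper_lower_upper
        lower_upper_lower lower_sup upper_inf sup_lower_upper_fixed inf_upper_lower_fixed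
        le_ustar[OF assms(2)] lplus_le) auto
qed

end
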